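(* Let $X$ be a finite connected simplicial complex and $\delta$ a cellular perversity. The family $\mathcal B(X,\delta)=\{U(\Delta,\delta)\}_{\Delta}$, indexed by all simplices $\Delta$ of $X$, is a base for a topology on $X$.
   Context: Simplices are open and $X$ is their disjoint union; $\Delta\leftrightarrow\Delta'$ means one is a face of the other. Cellular perversity: $\delta:\mathbb Z_{\ge0}\to\mathbb Z$, $\delta(0)=0$, bijective from each $\{0,\dots,k\}$ onto an interval $\{a,\dots,a+k\}$, $a\le0$; $\delta(\Delta)=\delta(\dim\Delta)$. Order $\Lambda(X,\delta)$: $\Delta\ge\Delta'$ iff there is a chain $\Delta=\Delta_0,\dots,\Delta_r=\Delta'$ ($r\ge0$) with $\Delta_i\leftrightarrow\Delta_{i+1}$ and $\delta(\Delta_i)=\delta(\Delta_{i+1})+1$. The perverse star is $U(\Delta,\delta)=\bigsqcup_{\Delta'\le\Delta}\Delta'$. *)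

theory Defs
  imports "HOL-Analysis.Analysis"
begin

definition finite_abs_complex :: "'v set set \<Rightarrow> bool" where
  "finite_abs_complex K \<longleftrightarrow> finite K \<and> (\<forall>s\<in>K. finite s \<and> s \<noteq> {}) \<and>
     (\<forall>s\<in>K. \<forall>t. t \<subseteq> s \<and> t \<noteq> {} \<longrightarrow> t \<in> K)"

text \<open>Geometric realization via barycentric coordinates: points are functions
  'v \<Rightarrow> real, nonnegative, summing to 1, whose support is a simplex.\<close>
definition realization :: "'v set set \<Rightarrow> ('v \<Rightarrow> real) set" where
  "realization K = {p. (\<forall>v. p v \<ge> 0) \<and> {v. p v \<noteq> 0} \<in> K \<and> sum p {v. p v \<noteq> 0} = 1}"

definition open_simplex :: "'v set set \<Rightarrow> 'v set \<Rightarrow> ('v \<Rightarrow> real) set" where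
  "open_simplex K s = {p \<in> realization K. {v. p v \<noteq> 0} = s}"

definition sdim :: "'v set \<Rightarrow> nat" where
  "sdim s = card s - 1"

definition cellular_perversity :: "(nat \<Rightarrow> int) \<Rightarrow> bool" where
  "cellular_perversity \<delta> \<longleftrightarrow> \<delta> 0 = 0 \<and>
     (\<forall>k::nat. \<exists>a::int. a \<le> 0 \<and> bij_betw \<delta> {0..k} {a..a + int k})"

definition face_rel :: "'v set \<Rightarrow> 'v set \<Rightarrow> bool" where
  "face_rel s t \<longleftrightarrow> s \<subseteq> t \<or> t \<subseteq> s"

definition perv_step :: "'v set set \<Rightarrow> (nat \<Rightarrow> int) \<Rightarrow> 'v set \<Rightarrow> 'v set \<Rightarrow> bool" where
  "perv_step K \<delta> s t \<longleftrightarrow> s \<in> K \<and> t \<in> K \<and> face_rel s t \<and> \<delta> (sdim s) = \<delta> (sdim t) + 1"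

text \<open>perv_le K \<delta> t s means s \<ge> t in \<Lambda>(X,\<delta>).\<close>
definition perv_le :: "'v set set \<Rightarrow> (nat \<Rightarrow> int) \<Rightarrow> 'v set \<Rightarrow> 'v set \<Rightarrow> bool" where
  "perv_le K \<delta> t s \<longleftrightarrow> s \<in> K \<and> t \<in> K \<and> (perv_step K \<delta>)\<^sup>*\<^sup>* s t"

definition perverse_star :: "'v set set \<Rightarrow> (nat \<Rightarrow> int) \<Rightarrow> 'v set \<Rightarrow> ('v \<Rightarrow> real) set" where
  "perverse_star K \<delta> s = \<Union>{open_simplex K t | t. perv_le K \<delta> t s}"

text \<open>Connectedness of the complex: any two simplices are joined by a chain of
  face relations (equivalent to connectedness of the realization).\<close>
definition connected_complex :: "'v set set \<Rightarrow> bool" where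
  "connected_complex K \<longleftrightarrow>
     (\<forall>s\<in>K. \<forall>t\<in>K. (\<lambda>a b. a \<in> K \<and> b \<in> K \<and> face_rel a b)\<^sup>*\<^sup>* s t)"

definition is_base_for_topology_on :: "'a set \<Rightarrow> 'a set set \<Rightarrow> bool" where
  "is_base_for_topology_on X B \<longleftrightarrow>
     (\<exists>T :: 'a topology. topspace T = X \<and> (\<forall>U. openin T U \<longleftrightarrow> (\<exists>F. F \<subseteq> B \<and> U = \<Union>F)))"

end

theory Submission
  imports Defs
begin

(* Every point p of X lies in the open simplex of its support, and since the order
   \<Lambda>(X,\<delta>) is transitive, the perverse star of that support is the smallest member
   of the family containing p.  Hence the intersection of two perverse stars is
   the union of the perverse stars of the supports of its points, which is the
   base criterion. *)

lemma is_base_for_topology_onI: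
  assumes cover: "\<Union>B = X"
    and inter: "\<And>S T x. S \<in> B \<Longrightarrow> T \<in> B \<Longrightarrow> x \<in> S \<inter> T \<Longrightarrow> \<exists>V\<in>B. x \<in> V \<and> V \<subseteq> S \<inter> T"
  shows "is_base_for_topology_on X B"
proof -
  let ?U = "arbitrary union_of (\<lambda>S. S \<in> B)"
  have "istopology ?U"
    unfolding istopology_base_eq arbitrary_union_of_alt using inter by blast
  moreover have "?U = (\<lambda>U. \<exists>F. F \<subseteq> B \<and> U = \<Union>F)"
    by (auto simp: union_of_def arbitrary_def fun_eq_iff)
  ultimately have open_eq: "openin (topology ?U) U \<longleftrightarrow> (\<exists>F. F \<subseteq> B \<and> U = \<Union>F)" for U
    by simp
  have "topspace (topology ?U) = X"
  proof (rule subset_antisym)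
    show "topspace (topology ?U) \<subseteq> X"
      using openin_topspace[of "topology ?U"] cover unfolding open_eq by blast
    show "X \<subseteq> topspace (topology ?U)"
      using cover open_eq openin_subset by blast
  qed
  then show ?thesis
    unfolding is_base_for_topology_on_def using open_eq by blast
qed

lemma support_in_complex: "p \<in> realization K \<Longrightarrow> {v. p v \<noteq> 0} \<in> K"
  unfolding realization_def by auto

lemma mem_perverse_star_iff:
  "p \<in> perverse_star K \<delta> s \<longleftrightarrow> p \<in> realization K \<and> perv_le K \<delta> {v. p v \<noteq> 0} s"
  unfolding perverse_star_def open_simplex_def by auto

lemma perv_le_trans: "perv_le K \<delta> t s \<Longrightarrow> perv_le K \<delta> s r \<Longrightarrow> perv_le K \<delta> t r"
  unfolding perv_le_def by (meson rtranclp_trans)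

lemma perverse_star_mono: "perv_le K \<delta> t s \<Longrightarrow> perverse_star K \<delta> t \<subseteq> perverse_star K \<delta> s"
  by (auto simp: mem_perverse_star_iff intro: perv_le_trans)

lemma perverse_star_subset_realization: "perverse_star K \<delta> s \<subseteq> realization K"
  by (auto simp: mem_perverse_star_iff)

lemma mem_perverse_star_support:
  "p \<in> realization K \<Longrightarrow> p \<in> perverse_star K \<delta> {v. p v \<noteq> 0}"
  by (simp add: mem_perverse_star_iff perv_le_def support_in_complex)

lemma perverse_star_support_least:
  "p \<in> perverse_star K \<delta> s \<Longrightarrow> perverse_star K \<delta> {v. p v \<noteq> 0} \<subseteq> perverse_star K \<delta> s"
  by (simp add: mem_perverse_star_iff perverse_star_mono)

lemma Union_perverse_stars: "\<Union>(perverse_star K \<delta> ` K) = realization K"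
proof (rule subset_antisym)
  show "\<Union>(perverse_star K \<delta> ` K) \<subseteq> realization K"
    by (simp add: UN_least perverse_star_subset_realization)
  show "realization K \<subseteq> \<Union>(perverse_star K \<delta> ` K)"
    using mem_perverse_star_support support_in_complex by (intro subsetI UN_I)
qed

theorem lemma2p3p3:
  fixes K :: "'v set set" and \<delta> :: "nat \<Rightarrow> int"
  assumes "finite_abs_complex K"
    and "connected_complex K"
    and "cellular_perversity \<delta>"
  shows "is_base_for_topology_on (realization K) (perverse_star K \<delta> ` K)"
proof (rule is_base_for_topology_onI[OF Union_perverse_stars])
  fix S T p
  assume "S \<in> perverse_star K \<delta> ` K" "T \<in> perverse_star K \<delta> ` K" and p: "p \<in> S \<inter> T"
  then obtain s t where S: "S = perverse_star K \<delta> s" and T: "T = perverse_star K \<delta> t"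
    by blast
  have "p \<in> realization K"
    using p S perverse_star_subset_realization by blast
  show "\<exists>V \<in> perverse_star K \<delta> ` K. p \<in> V \<and> V \<subseteq> S \<inter> T"
  proof (intro bexI conjI)
    show "perverse_star K \<delta> {v. p v \<noteq> 0} \<in> perverse_star K \<delta> ` K"
      using support_in_complex[OF \<open>p \<in> realization K\<close>] by (rule imageI)
    show "p \<in> perverse_star K \<delta> {v. p v \<noteq> 0}"
      using mem_perverse_star_support[OF \<open>p \<in> realization K\<close>] .
    show "perverse_star K \<delta> {v. p v \<noteq> 0} \<subseteq> S \<inter> T"
      using p perverse_star_support_least unfolding S T by blast
  qed
qed

end
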